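(* Let a group $G$ act on a connected weighted simplicial complex $\Omega$ on $[n]$ and let $d_0,\ldots,d_n$ be positive integers with $d_i=d_j$ whenever $i,j$ lie in the same $G$-orbit. Then for every $M\in\mathbb C^{d_0}\otimes\cdots\otimes\mathbb C^{d_n}$: (i) ${\rm rank}_{(\Omega,G)}(M)\leq{\rm nn\text{-}rank}_{(\Omega,G)}(M)$; (ii) ${\rm psd\text{-}rank}_{(\Omega,G)}(M)\leq{\rm nn\text{-}rank}_{(\Omega,G)}(M)$; (iii) ${\rm rank}_{(\Omega,G)}(M)\leq{\rm psd\text{-}rank}_{(\Omega,G)}(M)^2$.
   Context: Write $M=\sum_{i_0,\ldots,i_n}m_{i_0\ldots i_n}e_{i_0}\otimes\cdots\otimes e_{i_n}$ with standard basis vectors $e_j$. $[n]=\{0,\ldots,n\}$. A weighted simplicial complex (wsc) on $[n]$ is a function $\Omega\colon\mathcal P([n])\to\mathbb N=\{0,1,\ldots\}$ with $S_1\subseteq S_2\Rightarrow\Omega(S_1)\mid\Omega(S_2)$; simplices have $\Omega(S)\neq0$, singletons are simplices, facets are inclusion-maximal simplices, $\mathcal F$ the set of facets, $\widetilde{\mathcal F}$ the multiset containing each facet $F$ exactly $\Omega(F)$ times with collapse map $c$, $\widetilde{\mathcal F}_i$ the copies of facets containing $i$. $\Omega$ is connected if any two vertices are joined by a chain of vertices in which consecutive ones share a facet. A group action of $G$ on $\Omega$ is an action on $[n]$ with $\Omega(gS)=\Omega(S)$, plus an action on $\widetilde{\mathcal F}$ with $c(gx)=gc(x)$. For $\beta\colon\widetilde{\mathcal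 F}_i\to\mathcal I$, ${}^g\beta\colon\widetilde{\mathcal F}_{gi}\to\mathcal I$ is $x\mapsto\beta(g^{-1}x)$; $\alpha_{\mid i}$ is restriction of $\alpha\colon\widetilde{\mathcal F}\to\mathcal I$ to $\widetilde{\mathcal F}_i$. An $(\Omega,G)$-decomposition of $M$ is a finite set $\mathcal I$ and local vectors $w^{[i]}_\beta\in\mathbb C^{d_i}$ ($\beta\in\mathcal I^{\widetilde{\mathcal F}_i}$) with $M=\sum_{\alpha\in\mathcal I^{\widetilde{\mathcal F}}}w^{[0]}_{\alpha_{\mid0}}\otimes\cdots\otimes w^{[n]}_{\alpha_{\mid n}}$ and $w^{[i]}_\beta=w^{[gi]}_{{}^g\beta}$ for all $i,g,\beta$; ${\rm rank}_{(\Omega,G)}(M)$ is the minimal $|\mathcal I|$. ${\rm nn\text{-}rank}_{(\Omega,G)}(M)$ is the minimal $|\mathcal I|$ over such decompositions whose local vectors have real nonnegative entries. A positive semidefinite $(\Omega,G)$-decomposition of $M$ is a finite set $\mathcal I$ and psd matrices $E^{[i]}_j\in{\rm Mat}_{\mathcal I^{\widetilde{\mathcal F}_i}}(\mathbb C)$ ($i\in[n]$, $j=1,\ldots,d_i$) with $(E^{[gi]}_j)_{{}^g\beta,{}^g\beta'}=(E^{[i]}_j)_{\beta,\beta'}$ for all $i,g,j,\beta,\beta'$ and $m_{i_0\ldots i_n}=\sum_{\alpha,\alpha'\in\mathcal I^{\widetilde{\mathcal F}}}\prod_{k=0}^n(E^{[k]}_{i_k})_{\alpha_{\mid k},\alpha'_{\mid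 k}}$ for all $i_0,\ldots,i_n$; ${\rm psd\text{-}rank}_{(\Omega,G)}(M)$ is the minimal $|\mathcal I|$. Each rank is $\infty$ if no corresponding decomposition exists. *)

theory Defs
  imports "HOL-Algebra.Group_Action" "HOL-Library.Extended_Nat"
begin

(* Vertices are 0..n. A wsc is Omega :: nat set => nat, only consulted on subsets of {..n}. *)
definition wsc :: "nat \<Rightarrow> (nat set \<Rightarrow> nat) \<Rightarrow> bool" where
  "wsc n \<Omega> \<longleftrightarrow> (\<forall>S1 S2. S1 \<subseteq> S2 \<and> S2 \<subseteq> {..n} \<longrightarrow> \<Omega> S1 dvd \<Omega> S2)
                 \<and> (\<forall>i\<le>n. \<Omega> {i} \<noteq> 0)"

definition simplex :: "nat \<Rightarrow> (nat set \<Rightarrow> nat) \<Rightarrow> nat set \<Rightarrow> bool" where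
  "simplex n \<Omega> S \<longleftrightarrow> S \<subseteq> {..n} \<and> \<Omega> S \<noteq> 0"

definition facets :: "nat \<Rightarrow> (nat set \<Rightarrow> nat) \<Rightarrow> nat set set" where
  "facets n \<Omega> = {F. simplex n \<Omega> F \<and> (\<forall>S. simplex n \<Omega> S \<and> F \<subseteq> S \<longrightarrow> S = F)}"

(* multiset of facets: facet F appears as copies (F,0),...,(F,Omega F - 1); collapse map is fst *)
definition Ftilde :: "nat \<Rightarrow> (nat set \<Rightarrow> nat) \<Rightarrow> (nat set \<times> nat) set" where
  "Ftilde n \<Omega> = {(F, k). F \<in> facets n \<Omega> \<and> k < \<Omega> F}"

definition Ftilde_at :: "nat \<Rightarrow> (nat set \<Rightarrow> nat) \<Rightarrow> nat \<Rightarrow> (nat set \<times> nat) set" where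
  "Ftilde_at n \<Omega> i = {x \<in> Ftilde n \<Omega>. i \<in> fst x}"

definition wsc_connected :: "nat \<Rightarrow> (nat set \<Rightarrow> nat) \<Rightarrow> bool" where
  "wsc_connected n \<Omega> \<longleftrightarrow>
     (\<forall>i\<le>n. \<forall>j\<le>n. (\<lambda>a b. \<exists>F\<in>facets n \<Omega>. a \<in> F \<and> b \<in> F)\<^sup>*\<^sup>* i j)"

definition wsc_group_action ::
  "nat \<Rightarrow> (nat set \<Rightarrow> nat) \<Rightarrow> ('g, 'm) monoid_scheme \<Rightarrow> ('g \<Rightarrow> nat \<Rightarrow> nat)
    \<Rightarrow> ('g \<Rightarrow> nat set \<times> nat \<Rightarrow> nat set \<times> nat) \<Rightarrow> bool" where
  "wsc_group_action n \<Omega> G \<phi> \<psi> \<longleftrightarrow>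
     wsc n \<Omega> \<and> group_action G {..n} \<phi>
     \<and> (\<forall>g\<in>carrier G. \<forall>S. S \<subseteq> {..n} \<longrightarrow> \<Omega> (\<phi> g ` S) = \<Omega> S)
     \<and> group_action G (Ftilde n \<Omega>) \<psi>
     \<and> (\<forall>g\<in>carrier G. \<forall>x\<in>Ftilde n \<Omega>. fst (\<psi> g x) = \<phi> g ` fst x)"

(* index set I = {..<r}; local index beta : Ftilde_i -> I *)
definition loc_idx :: "nat \<Rightarrow> (nat set \<Rightarrow> nat) \<Rightarrow> nat \<Rightarrow> nat \<Rightarrow> ((nat set \<times> nat) \<Rightarrow> nat) set" where
  "loc_idx n \<Omega> r i = Ftilde_at n \<Omega> i \<rightarrow>\<^sub>E {..<r}"

definition glob_idx :: "nat \<Rightarrow> (nat set \<Rightarrow> nat) \<Rightarrow> nat \<Rightarrow> ((nat set \<times> nat) \<Rightarrow> nat) set" where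
  "glob_idx n \<Omega> r = Ftilde n \<Omega> \<rightarrow>\<^sub>E {..<r}"

definition res :: "nat \<Rightarrow> (nat set \<Rightarrow> nat) \<Rightarrow> ((nat set \<times> nat) \<Rightarrow> nat) \<Rightarrow> nat \<Rightarrow> ((nat set \<times> nat) \<Rightarrow> nat)" where
  "res n \<Omega> \<alpha> i = restrict \<alpha> (Ftilde_at n \<Omega> i)"

definition gact ::
  "nat \<Rightarrow> (nat set \<Rightarrow> nat) \<Rightarrow> ('g, 'm) monoid_scheme \<Rightarrow> ('g \<Rightarrow> nat \<Rightarrow> nat)
    \<Rightarrow> ('g \<Rightarrow> nat set \<times> nat \<Rightarrow> nat set \<times> nat) \<Rightarrow> 'g \<Rightarrow> nat
    \<Rightarrow> ((nat set \<times> nat) \<Rightarrow> nat) \<Rightarrow> ((nat set \<times> nat) \<Rightarrow> nat)" where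
  "gact n \<Omega> G \<phi> \<psi> g i \<beta> = restrict (\<lambda>x. \<beta> (\<psi> (inv\<^bsub>G\<^esub> g) x)) (Ftilde_at n \<Omega> (\<phi> g i))"

(* multi-indices (i_0,...,i_n) of C^{d_0} (x) ... (x) C^{d_n}; tensors are M :: (nat => nat) => complex *)
definition tidx :: "nat \<Rightarrow> (nat \<Rightarrow> nat) \<Rightarrow> (nat \<Rightarrow> nat) set" where
  "tidx n d = PiE {..n} (\<lambda>k. {..<d k})"

(* (Omega,G)-decomposition with I = {..<r}; local vectors w i beta in C^{d i} (entries j < d i) *)
definition is_decomp ::
  "nat \<Rightarrow> (nat set \<Rightarrow> nat) \<Rightarrow> ('g, 'm) monoid_scheme \<Rightarrow> ('g \<Rightarrow> nat \<Rightarrow> nat)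
    \<Rightarrow> ('g \<Rightarrow> nat set \<times> nat \<Rightarrow> nat set \<times> nat) \<Rightarrow> (nat \<Rightarrow> nat) \<Rightarrow> ((nat \<Rightarrow> nat) \<Rightarrow> complex)
    \<Rightarrow> nat \<Rightarrow> (nat \<Rightarrow> ((nat set \<times> nat) \<Rightarrow> nat) \<Rightarrow> nat \<Rightarrow> complex) \<Rightarrow> bool" where
  "is_decomp n \<Omega> G \<phi> \<psi> d M r w \<longleftrightarrow>
     (\<forall>idx\<in>tidx n d. M idx =
        (\<Sum>\<alpha>\<in>glob_idx n \<Omega> r. \<Prod>k\<le>n. w k (res n \<Omega> \<alpha> k) (idx k)))
   \<and> (\<forall>i\<le>n. \<forall>g\<in>carrier G. \<forall>\<beta>\<in>loc_idx n \<Omega> r i. \<forall>j<d i.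
        w i \<beta> j = w (\<phi> g i) (gact n \<Omega> G \<phi> \<psi> g i \<beta>) j)"

definition is_nn_decomp ::
  "nat \<Rightarrow> (nat set \<Rightarrow> nat) \<Rightarrow> ('g, 'm) monoid_scheme \<Rightarrow> ('g \<Rightarrow> nat \<Rightarrow> nat)
    \<Rightarrow> ('g \<Rightarrow> nat set \<times> nat \<Rightarrow> nat set \<times> nat) \<Rightarrow> (nat \<Rightarrow> nat) \<Rightarrow> ((nat \<Rightarrow> nat) \<Rightarrow> complex)
    \<Rightarrow> nat \<Rightarrow> (nat \<Rightarrow> ((nat set \<times> nat) \<Rightarrow> nat) \<Rightarrow> nat \<Rightarrow> complex) \<Rightarrow> bool" where
  "is_nn_decomp n \<Omega> G \<phi> \<psi> d M r w \<longleftrightarrow>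
     is_decomp n \<Omega> G \<phi> \<psi> d M r w
   \<and> (\<forall>i\<le>n. \<forall>\<beta>\<in>loc_idx n \<Omega> r i. \<forall>j<d i. Im (w i \<beta> j) = 0 \<and> 0 \<le> Re (w i \<beta> j))"

definition psd_on :: "'a set \<Rightarrow> ('a \<Rightarrow> 'a \<Rightarrow> complex) \<Rightarrow> bool" where
  "psd_on A B \<longleftrightarrow> (\<forall>x\<in>A. \<forall>y\<in>A. B y x = cnj (B x y))
     \<and> (\<forall>v. let q = (\<Sum>x\<in>A. \<Sum>y\<in>A. cnj (v x) * B x y * v y) in Im q = 0 \<and> 0 \<le> Re q)"

(* psd (Omega,G)-decomposition with I = {..<r}; E i j is E^{[i]}_{j+1} (0-based j < d i) *)
definition is_psd_decomp ::
  "nat \<Rightarrow> (nat set \<Rightarrow> nat) \<Rightarrow> ('g, 'm) monoid_scheme \<Rightarrow> ('g \<Rightarrow> nat \<Rightarrow> nat)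
    \<Rightarrow> ('g \<Rightarrow> nat set \<times> nat \<Rightarrow> nat set \<times> nat) \<Rightarrow> (nat \<Rightarrow> nat) \<Rightarrow> ((nat \<Rightarrow> nat) \<Rightarrow> complex)
    \<Rightarrow> nat \<Rightarrow> (nat \<Rightarrow> nat \<Rightarrow> ((nat set \<times> nat) \<Rightarrow> nat) \<Rightarrow> ((nat set \<times> nat) \<Rightarrow> nat) \<Rightarrow> complex)
    \<Rightarrow> bool" where
  "is_psd_decomp n \<Omega> G \<phi> \<psi> d M r E \<longleftrightarrow>
     (\<forall>i\<le>n. \<forall>j<d i. psd_on (loc_idx n \<Omega> r i) (E i j))
   \<and> (\<forall>i\<le>n. \<forall>g\<in>carrier G. \<forall>j<d i. \<forall>\<beta>\<in>loc_idx n \<Omega> r i. \<forall>\<beta>'\<in>loc_idx n \<Omega> r i.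
        E (\<phi> g i) j (gact n \<Omega> G \<phi> \<psi> g i \<beta>) (gact n \<Omega> G \<phi> \<psi> g i \<beta>') = E i j \<beta> \<beta>')
   \<and> (\<forall>idx\<in>tidx n d. M idx =
        (\<Sum>\<alpha>\<in>glob_idx n \<Omega> r. \<Sum>\<alpha>'\<in>glob_idx n \<Omega> r.
           \<Prod>k\<le>n. E k (idx k) (res n \<Omega> \<alpha> k) (res n \<Omega> \<alpha>' k)))"

(* ranks: minimal |I|, infinity if no decomposition exists (Inf {} = \<infinity> in enat) *)
definition rank_OG where
  "rank_OG n \<Omega> G \<phi> \<psi> d M = Inf (enat ` {r. \<exists>w. is_decomp n \<Omega> G \<phi> \<psi> d M r w})"

definition nn_rank_OG where
  "nn_rank_OG n \<Omega> G \<phi> \<psi> d M = Inf (enat ` {r. \<exists>w. is_nn_decomp n \<Omega> G \<phi> \<psi> d M r w})"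

definition psd_rank_OG where
  "psd_rank_OG n \<Omega> G \<phi> \<psi> d M = Inf (enat ` {r. \<exists>E. is_psd_decomp n \<Omega> G \<phi> \<psi> d M r E})"

end

theory Submission imports Defs begin

text \<open>
  For (ii), put the nonnegative local vectors on the diagonals of the psd matrices:
  every copy of a facet contains a vertex, so a global index \<open>\<alpha>\<close> is determined by its restrictions
  \<open>res n \<Omega> \<alpha> k\<close>, and the double sum over \<open>(\<alpha>, \<alpha>')\<close> collapses to its diagonal. For (iii), read a
  local index with values in \<open>{..<r * r}\<close> as a pair of local indices with values in \<open>{..<r}\<close>
  (base-\<open>r\<close> digits, \<open>split_idx\<close>) and use the entry of the psd matrix at that pair as the local
  vector; digit extraction commutes with restriction and with the group action.
\<close>

lemma finite_Ftilde: "finite (Ftilde n \<Omega>)"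
proof -
  have "facets n \<Omega> \<subseteq> Pow {..n}"
    unfolding facets_def simplex_def by auto
  then have "finite (facets n \<Omega>)"
    by (rule finite_subset) auto
  moreover have "Ftilde n \<Omega> = (SIGMA F:facets n \<Omega>. {..<\<Omega> F})"
    unfolding Ftilde_def by auto
  ultimately show ?thesis by auto
qed

lemma Ftilde_at_subset: "Ftilde_at n \<Omega> i \<subseteq> Ftilde n \<Omega>"
  unfolding Ftilde_at_def by auto

lemma finite_glob_idx: "finite (glob_idx n \<Omega> r)"
  unfolding glob_idx_def by (intro finite_PiE finite_Ftilde) auto

lemma finite_loc_idx: "finite (loc_idx n \<Omega> r i)"
  unfolding loc_idx_def
  by (intro finite_PiE finite_subset[OF Ftilde_at_subset finite_Ftilde]) auto

lemma Ftilde_covered_by_Ftilde_at: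
  assumes "wsc n \<Omega>" and "x \<in> Ftilde n \<Omega>"
  obtains k where "k \<le> n" and "x \<in> Ftilde_at n \<Omega> k"
proof -
  obtain F c where x: "x = (F, c)" and F: "F \<in> facets n \<Omega>"
    using assms(2) unfolding Ftilde_def by auto
  have "simplex n \<Omega> {0}"
    using assms(1) unfolding simplex_def wsc_def by auto
  then have "F \<noteq> {}"
    using F unfolding facets_def by blast
  moreover have "F \<subseteq> {..n}"
    using F unfolding facets_def simplex_def by auto
  ultimately show ?thesis
    using that assms(2) x unfolding Ftilde_at_def by auto
qed

lemma glob_idx_eqI_res:
  assumes "wsc n \<Omega>" and "\<alpha> \<in> glob_idx n \<Omega> r" and "\<alpha>' \<in> glob_idx n \<Omega> r"
    and "\<And>k. k \<le> n \<Longrightarrow> res n \<Omega> \<alpha> k = res n \<Omega> \<alpha>' k"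
  shows "\<alpha> = \<alpha>'"
proof (rule extensionalityI[of _ "Ftilde n \<Omega>"])
  show "\<alpha> \<in> extensional (Ftilde n \<Omega>)" "\<alpha>' \<in> extensional (Ftilde n \<Omega>)"
    using assms(2,3) unfolding glob_idx_def by (auto simp: PiE_def)
next
  fix x assume "x \<in> Ftilde n \<Omega>"
  then obtain k where "k \<le> n" and x: "x \<in> Ftilde_at n \<Omega> k"
    using Ftilde_covered_by_Ftilde_at[OF assms(1)] by blast
  then have "res n \<Omega> \<alpha> k x = res n \<Omega> \<alpha>' k x"
    using assms(4) by simp
  then show "\<alpha> x = \<alpha>' x"
    using x unfolding res_def by simp
qed

lemma psd_on_diagonal:
  assumes "finite A" and nonneg: "\<And>x. x \<in> A \<Longrightarrow> Im (a x) = 0 \<and> 0 \<le> Re (a x)"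
  shows "psd_on A (\<lambda>x y. if x = y then a x else 0)"
proof -
  have real: "a x = complex_of_real (Re (a x))" if "x \<in> A" for x
    using nonneg[OF that] by (simp add: complex_eq_iff)
  have "(\<Sum>x\<in>A. \<Sum>y\<in>A. cnj (v x) * (if x = y then a x else 0) * v y)
      = complex_of_real (\<Sum>x\<in>A. (cmod (v x))\<^sup>2 * Re (a x))" for v
  proof -
    have "(\<Sum>x\<in>A. \<Sum>y\<in>A. cnj (v x) * (if x = y then a x else 0) * v y)
        = (\<Sum>x\<in>A. (v x * cnj (v x)) * a x)"
      using \<open>finite A\<close> by (simp add: if_distrib if_distribR mult_ac cong: if_cong)
    also have "\<dots> = (\<Sum>x\<in>A. complex_of_real ((cmod (v x))\<^sup>2 * Re (a x)))"
      using real by (intro sum.cong) (auto simp: complex_norm_square[symmetric])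
    finally show ?thesis by simp
  qed
  moreover have "0 \<le> (\<Sum>x\<in>A. (cmod (v x))\<^sup>2 * Re (a x))" for v
    using nonneg by (intro sum_nonneg mult_nonneg_nonneg) auto
  ultimately show ?thesis
    using real unfolding psd_on_def Let_def by (auto simp: complex_eq_iff)
qed

definition split_idx :: "nat \<Rightarrow> 'a set \<Rightarrow> ('a \<Rightarrow> nat) \<Rightarrow> ('a \<Rightarrow> nat) \<times> ('a \<Rightarrow> nat)" where
  "split_idx r A \<gamma> = (restrict ((\<lambda>m. m div r) \<circ> \<gamma>) A, restrict ((\<lambda>m. m mod r) \<circ> \<gamma>) A)"

lemma bij_betw_split_idx:
  "bij_betw (split_idx r A) (A \<rightarrow>\<^sub>E {..<r * r}) ((A \<rightarrow>\<^sub>E {..<r}) \<times> (A \<rightarrow>\<^sub>E {..<r}))"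
proof (rule bij_betw_byWitness[where f' = "\<lambda>(a, b). restrict (\<lambda>x. a x * r + b x) A"])
  have digits_less: "a * r + b < r * r" if "a < r" "b < r" for a b :: nat
  proof -
    have "a * r + b < (a + 1) * r" using that by simp
    also have "\<dots> \<le> r * r" using that by (intro mult_right_mono) auto
    finally show ?thesis .
  qed
  have digits_less_r: "m div r < r" "m mod r < r" if "m < r * r" for m :: nat
    using that by (auto simp: less_mult_imp_div_less intro!: mod_less_divisor gr0I)
  have digits_div_mod: "(a * r + b) div r = a" "(a * r + b) mod r = b" if "b < r" for a b :: nat
    using that by auto
  show "\<forall>\<gamma>\<in>A \<rightarrow>\<^sub>E {..<r * r}. (\<lambda>(a, b). restrict (\<lambda>x. a x * r + b x) A) (split_idx r A \<gamma>) = \<gamma>"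
    unfolding split_idx_def by (auto intro!: extensionalityI[of _ A] simp: PiE_def)
  show "\<forall>ab\<in>(A \<rightarrow>\<^sub>E {..<r}) \<times> (A \<rightarrow>\<^sub>E {..<r}).
      split_idx r A ((\<lambda>(a, b). restrict (\<lambda>x. a x * r + b x) A) ab) = ab"
    unfolding split_idx_def
    by (auto intro!: extensionalityI[of _ A] simp: PiE_def Pi_iff digits_div_mod)
  show "split_idx r A ` (A \<rightarrow>\<^sub>E {..<r * r}) \<subseteq> (A \<rightarrow>\<^sub>E {..<r}) \<times> (A \<rightarrow>\<^sub>E {..<r})"
    unfolding split_idx_def by (auto simp: PiE_iff digits_less_r)
  show "(\<lambda>(a, b). restrict (\<lambda>x. a x * r + b x) A) ` ((A \<rightarrow>\<^sub>E {..<r}) \<times> (A \<rightarrow>\<^sub>E {..<r}))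
      \<subseteq> A \<rightarrow>\<^sub>E {..<r * r}"
    by (auto simp: PiE_iff digits_less)
qed

lemma split_idx_restrict:
  assumes "B \<subseteq> A"
  shows "split_idx r B (restrict \<gamma> B) = map_prod (\<lambda>\<beta>. restrict \<beta> B) (\<lambda>\<beta>. restrict \<beta> B) (split_idx r A \<gamma>)"
  using assms unfolding split_idx_def by (auto simp: Int_absorb1 intro!: restrict_ext)

lemma Inf_enat_image_le_square:
  assumes "\<And>r. r \<in> B \<Longrightarrow> r * r \<in> A"
  shows "Inf (enat ` A) \<le> (Inf (enat ` B))\<^sup>2"
proof (cases "B = {}")
  case True
  then show ?thesis by (simp add: power2_eq_square top_enat_def)
next
  case False
  then obtain m0 where "m0 \<in> B"
    by blast
  then have "Inf (enat ` B) \<in> enat ` B"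
    using LeastI[of "\<lambda>x. x \<in> enat ` B" "enat m0"] unfolding Inf_enat_def by auto
  then obtain m where "m \<in> B" and "Inf (enat ` B) = enat m"
    by blast
  then show ?thesis
    using assms by (auto simp: power2_eq_square intro: Inf_lower)
qed

locale wsc_action =
  fixes n :: nat and \<Omega> :: "nat set \<Rightarrow> nat" and G :: "('g, 'm) monoid_scheme"
    and \<phi> :: "'g \<Rightarrow> nat \<Rightarrow> nat" and \<psi> :: "'g \<Rightarrow> nat set \<times> nat \<Rightarrow> nat set \<times> nat"
  assumes wsc_group_action: "wsc_group_action n \<Omega> G \<phi> \<psi>"
begin

lemma wsc: "wsc n \<Omega>"
  using wsc_group_action unfolding wsc_group_action_def by blast

lemma group_action_vertices: "group_action G {..n} \<phi>"
  using wsc_group_action unfolding wsc_group_action_def by blast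

lemma group_action_Ftilde: "group_action G (Ftilde n \<Omega>) \<psi>"
  using wsc_group_action unfolding wsc_group_action_def by blast

lemma fst_psi: "g \<in> carrier G \<Longrightarrow> x \<in> Ftilde n \<Omega> \<Longrightarrow> fst (\<psi> g x) = \<phi> g ` fst x"
  using wsc_group_action unfolding wsc_group_action_def by blast

lemma psi_Ftilde_at:
  assumes "g \<in> carrier G" and "x \<in> Ftilde_at n \<Omega> i"
  shows "\<psi> g x \<in> Ftilde_at n \<Omega> (\<phi> g i)"
proof -
  have "x \<in> Ftilde n \<Omega>" and "i \<in> fst x"
    using assms(2) unfolding Ftilde_at_def by auto
  then show ?thesis
    using group_action.element_image[OF group_action_Ftilde assms(1)] fst_psi[OF assms(1)]
    unfolding Ftilde_at_def by auto
qed

lemma psi_inv_Ftilde_at: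
  assumes g: "g \<in> carrier G" and "i \<le> n" and "x \<in> Ftilde_at n \<Omega> (\<phi> g i)"
  shows "\<psi> (inv\<^bsub>G\<^esub> g) x \<in> Ftilde_at n \<Omega> i"
proof -
  have "inv\<^bsub>G\<^esub> g \<in> carrier G"
    using g group_action.group_hom[OF group_action_vertices] by (simp add: group_hom_def)
  moreover have "\<phi> (inv\<^bsub>G\<^esub> g) (\<phi> g i) = i"
    using group_action.orbit_sym_aux[OF group_action_vertices g] \<open>i \<le> n\<close> by auto
  ultimately show ?thesis
    using psi_Ftilde_at[of "inv\<^bsub>G\<^esub> g" x "\<phi> g i"] assms(3) by simp
qed

lemma gact_psi:
  assumes "g \<in> carrier G" and "y \<in> Ftilde_at n \<Omega> i"
  shows "gact n \<Omega> G \<phi> \<psi> g i \<beta> (\<psi> g y) = \<beta> y"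
proof -
  have "\<psi> g y \<in> Ftilde_at n \<Omega> (\<phi> g i)"
    using psi_Ftilde_at[OF assms] .
  moreover have "\<psi> (inv\<^bsub>G\<^esub> g) (\<psi> g y) = y"
    using group_action.orbit_sym_aux[OF group_action_Ftilde assms(1)] assms(2) Ftilde_at_subset
    by blast
  ultimately show ?thesis
    unfolding gact_def by simp
qed

lemma inj_on_gact:
  assumes "g \<in> carrier G"
  shows "inj_on (gact n \<Omega> G \<phi> \<psi> g i) (loc_idx n \<Omega> r i)"
proof (rule inj_onI)
  fix \<beta> \<beta>' assume "\<beta> \<in> loc_idx n \<Omega> r i" "\<beta>' \<in> loc_idx n \<Omega> r i"
    and eq: "gact n \<Omega> G \<phi> \<psi> g i \<beta> = gact n \<Omega> G \<phi> \<psi> g i \<beta>'"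
  then have "\<beta> \<in> extensional (Ftilde_at n \<Omega> i)" "\<beta>' \<in> extensional (Ftilde_at n \<Omega> i)"
    unfolding loc_idx_def by (auto simp: PiE_def)
  moreover have "\<beta> y = \<beta>' y" if "y \<in> Ftilde_at n \<Omega> i" for y
    using gact_psi[OF assms that] eq by metis
  ultimately show "\<beta> = \<beta>'"
    by (rule extensionalityI)
qed

lemma gact_restrict_comp:
  assumes "g \<in> carrier G" and "i \<le> n"
  shows "gact n \<Omega> G \<phi> \<psi> g i (restrict (f \<circ> \<beta>) (Ftilde_at n \<Omega> i))
       = restrict (f \<circ> gact n \<Omega> G \<phi> \<psi> g i \<beta>) (Ftilde_at n \<Omega> (\<phi> g i))"
  using psi_inv_Ftilde_at[OF assms] unfolding gact_def by (intro restrict_ext) auto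

lemma split_idx_gact:
  assumes "g \<in> carrier G" and "i \<le> n"
  shows "split_idx r (Ftilde_at n \<Omega> (\<phi> g i)) (gact n \<Omega> G \<phi> \<psi> g i \<beta>)
       = map_prod (gact n \<Omega> G \<phi> \<psi> g i) (gact n \<Omega> G \<phi> \<psi> g i) (split_idx r (Ftilde_at n \<Omega> i) \<beta>)"
  unfolding split_idx_def by (simp add: gact_restrict_comp[OF assms])

lemma psd_decomp_of_nn_decomp:
  assumes "is_nn_decomp n \<Omega> G \<phi> \<psi> d M r w"
  shows "is_psd_decomp n \<Omega> G \<phi> \<psi> d M r (\<lambda>i j \<beta> \<beta>'. if \<beta> = \<beta>' then w i \<beta> j else 0)"
proof -
  define E where "E = (\<lambda>i j \<beta> \<beta>'. if \<beta> = \<beta>' then w i \<beta> j else 0)"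
  have sum_w: "\<And>idx. idx \<in> tidx n d \<Longrightarrow>
      M idx = (\<Sum>\<alpha>\<in>glob_idx n \<Omega> r. \<Prod>k\<le>n. w k (res n \<Omega> \<alpha> k) (idx k))"
    and w_gact: "\<And>i g \<beta> j. \<lbrakk>i \<le> n; g \<in> carrier G; \<beta> \<in> loc_idx n \<Omega> r i; j < d i\<rbrakk> \<Longrightarrow>
      w i \<beta> j = w (\<phi> g i) (gact n \<Omega> G \<phi> \<psi> g i \<beta>) j"
    and nonneg: "\<And>i \<beta> j. \<lbrakk>i \<le> n; \<beta> \<in> loc_idx n \<Omega> r i; j < d i\<rbrakk> \<Longrightarrow>
      Im (w i \<beta> j) = 0 \<and> 0 \<le> Re (w i \<beta> j)"
    using assms unfolding is_nn_decomp_def is_decomp_def by blast+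
  have psd: "psd_on (loc_idx n \<Omega> r i) (E i j)" if "i \<le> n" "j < d i" for i j
    unfolding E_def using that by (intro psd_on_diagonal finite_loc_idx nonneg)
  have E_gact: "E (\<phi> g i) j (gact n \<Omega> G \<phi> \<psi> g i \<beta>) (gact n \<Omega> G \<phi> \<psi> g i \<beta>') = E i j \<beta> \<beta>'"
    if "i \<le> n" "g \<in> carrier G" "j < d i" "\<beta> \<in> loc_idx n \<Omega> r i" "\<beta>' \<in> loc_idx n \<Omega> r i"
    for i g j \<beta> \<beta>'
    using that w_gact inj_on_gact[OF that(2), of i r] unfolding E_def by (auto dest: inj_onD)
  have diagonal_prod: "(\<Prod>k\<le>n. E k (idx k) (res n \<Omega> \<alpha> k) (res n \<Omega> \<alpha>' k))
      = (if \<alpha> = \<alpha>' then \<Prod>k\<le>n. w k (res n \<Omega> \<alpha> k) (idx k) else 0)"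
    if glob: "\<alpha> \<in> glob_idx n \<Omega> r" "\<alpha>' \<in> glob_idx n \<Omega> r" for idx \<alpha> \<alpha>'
  proof (cases "\<alpha> = \<alpha>'")
    case True
    then show ?thesis
      unfolding E_def by simp
  next
    case False
    then obtain k where "k \<le> n" "res n \<Omega> \<alpha> k \<noteq> res n \<Omega> \<alpha>' k"
      using glob_idx_eqI_res[OF wsc glob] by blast
    then have "(\<Prod>k\<le>n. E k (idx k) (res n \<Omega> \<alpha> k) (res n \<Omega> \<alpha>' k)) = 0"
      unfolding E_def by (intro prod_zero) auto
    with False show ?thesis
      by simp
  qed
  have M_eq: "M idx = (\<Sum>\<alpha>\<in>glob_idx n \<Omega> r. \<Sum>\<alpha>'\<in>glob_idx n \<Omega> r.
      \<Prod>k\<le>n. E k (idx k) (res n \<Omega> \<alpha> k) (res n \<Omega> \<alpha>' k))" if "idx \<in> tidx n d" for idx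
    using sum_w[OF that] by (simp add: diagonal_prod finite_glob_idx cong: sum.cong)
  have "is_psd_decomp n \<Omega> G \<phi> \<psi> d M r E"
    unfolding is_psd_decomp_def using psd E_gact M_eq by blast
  then show ?thesis
    unfolding E_def .
qed

lemma decomp_of_psd_decomp:
  assumes "is_psd_decomp n \<Omega> G \<phi> \<psi> d M r E"
  shows "is_decomp n \<Omega> G \<phi> \<psi> d M (r * r) (\<lambda>k \<beta> j. case_prod (E k j) (split_idx r (Ftilde_at n \<Omega> k) \<beta>))"
proof -
  define w where "w = (\<lambda>k \<beta> j. case_prod (E k j) (split_idx r (Ftilde_at n \<Omega> k) \<beta>))"
  have E_gact: "\<And>i g j \<beta> \<beta>'. \<lbrakk>i \<le> n; g \<in> carrier G; j < d i;
      \<beta> \<in> loc_idx n \<Omega> r i; \<beta>' \<in> loc_idx n \<Omega> r i\<rbrakk> \<Longrightarrow>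
      E (\<phi> g i) j (gact n \<Omega> G \<phi> \<psi> g i \<beta>) (gact n \<Omega> G \<phi> \<psi> g i \<beta>') = E i j \<beta> \<beta>'"
    and sum_E: "\<And>idx. idx \<in> tidx n d \<Longrightarrow> M idx = (\<Sum>\<alpha>\<in>glob_idx n \<Omega> r. \<Sum>\<alpha>'\<in>glob_idx n \<Omega> r.
      \<Prod>k\<le>n. E k (idx k) (res n \<Omega> \<alpha> k) (res n \<Omega> \<alpha>' k))"
    using assms unfolding is_psd_decomp_def by blast+
  have w_gact: "w i \<beta> j = w (\<phi> g i) (gact n \<Omega> G \<phi> \<psi> g i \<beta>) j"
    if "i \<le> n" "g \<in> carrier G" "\<beta> \<in> loc_idx n \<Omega> (r * r) i" "j < d i" for i g \<beta> j
  proof -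
    have "split_idx r (Ftilde_at n \<Omega> i) \<beta> \<in> loc_idx n \<Omega> r i \<times> loc_idx n \<Omega> r i"
      using bij_betw_apply[OF bij_betw_split_idx] that(3) unfolding loc_idx_def .
    then show ?thesis
      using E_gact[OF that(1,2,4)] unfolding w_def by (auto simp: split_idx_gact[OF that(2,1)])
  qed
  have M_eq: "M idx = (\<Sum>\<gamma>\<in>glob_idx n \<Omega> (r * r). \<Prod>k\<le>n. w k (res n \<Omega> \<gamma> k) (idx k))"
    if "idx \<in> tidx n d" for idx
  proof -
    define h where "h = (\<lambda>(\<alpha>, \<alpha>'). \<Prod>k\<le>n. E k (idx k) (res n \<Omega> \<alpha> k) (res n \<Omega> \<alpha>' k))"
    have "(\<Sum>\<gamma>\<in>glob_idx n \<Omega> (r * r). \<Prod>k\<le>n. w k (res n \<Omega> \<gamma> k) (idx k))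
        = (\<Sum>\<gamma>\<in>glob_idx n \<Omega> (r * r). h (split_idx r (Ftilde n \<Omega>) \<gamma>))"
      unfolding w_def h_def res_def by (simp add: split_idx_restrict[OF Ftilde_at_subset] case_prod_beta)
    also have "\<dots> = (\<Sum>\<alpha>\<alpha>'\<in>glob_idx n \<Omega> r \<times> glob_idx n \<Omega> r. h \<alpha>\<alpha>')"
      using bij_betw_split_idx unfolding glob_idx_def by (rule sum.reindex_bij_betw)
    also have "\<dots> = M idx"
      unfolding h_def sum_E[OF that] by (simp add: sum.cartesian_product)
    finally show ?thesis by simp
  qed
  have "is_decomp n \<Omega> G \<phi> \<psi> d M (r * r) w"
    unfolding is_decomp_def using w_gact M_eq by blast
  then show ?thesis
    unfolding w_def .
qed

end

theorem corollary5p4: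
  fixes n :: nat and \<Omega> :: "nat set \<Rightarrow> nat" and G :: "'g monoid"
    and \<phi> :: "'g \<Rightarrow> nat \<Rightarrow> nat" and \<psi> :: "'g \<Rightarrow> nat set \<times> nat \<Rightarrow> nat set \<times> nat"
    and d :: "nat \<Rightarrow> nat" and M :: "(nat \<Rightarrow> nat) \<Rightarrow> complex"
  assumes "wsc_group_action n \<Omega> G \<phi> \<psi>"
    and "wsc_connected n \<Omega>"
    and "\<forall>i\<le>n. 0 < d i"
    and "\<forall>g\<in>carrier G. \<forall>i\<le>n. d (\<phi> g i) = d i"
  shows "rank_OG n \<Omega> G \<phi> \<psi> d M \<le> nn_rank_OG n \<Omega> G \<phi> \<psi> d M
       \<and> psd_rank_OG n \<Omega> G \<phi> \<psi> d M \<le> nn_rank_OG n \<Omega> G \<phi> \<psi> d M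
       \<and> rank_OG n \<Omega> G \<phi> \<psi> d M \<le> (psd_rank_OG n \<Omega> G \<phi> \<psi> d M) ^ 2"
proof -
  interpret wsc_action n \<Omega> G \<phi> \<psi>
    using assms(1) by unfold_locales
  have "{r. \<exists>w. is_nn_decomp n \<Omega> G \<phi> \<psi> d M r w} \<subseteq> {r. \<exists>w. is_decomp n \<Omega> G \<phi> \<psi> d M r w}"
    unfolding is_nn_decomp_def by blast
  moreover have "{r. \<exists>w. is_nn_decomp n \<Omega> G \<phi> \<psi> d M r w} \<subseteq> {r. \<exists>E. is_psd_decomp n \<Omega> G \<phi> \<psi> d M r E}"
    using psd_decomp_of_nn_decomp by blast
  moreover have "r * r \<in> {r. \<exists>w. is_decomp n \<Omega> G \<phi> \<psi> d M r w}"
    if "r \<in> {r. \<exists>E. is_psd_decomp n \<Omega> G \<phi> \<psi> d M r E}" for r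
    using that decomp_of_psd_decomp by blast
  ultimately show ?thesis
    unfolding rank_OG_def nn_rank_OG_def psd_rank_OG_def
    by (intro conjI Inf_superset_mono image_mono Inf_enat_image_le_square)
qed

end
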